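(* Let $m\ge 4$ and let $K\ne\Delta_{[m]}$ be a simplicial complex on $[m]$ with $f_0(K)=f_0(K^\vee)=m$. If $\chi(\mathrm{Bier}(K))=m-1$, then $\mathrm{Bier}(K)$ is a weak suspension.
   Context: A simplicial complex $K$ on $[m]=\{1,\dots,m\}$ is a nonempty family of subsets of $[m]$ closed under taking subsets; $V(K)=\{i:\{i\}\in K\}$, $f_0(K)=|V(K)|$. $\Delta_{[m]}=2^{[m]}$. Let $[m']=\{1',\dots,m'\}$ be a disjoint copy of $[m]$, $I'=\{i':i\in I\}$. For $K\ne\Delta_{[m]}$ the Alexander dual $K^\vee$ is the complex on $[m']$ with $J'\in K^\vee$ iff $[m]\setminus J\notin K$. The Bier sphere $\mathrm{Bier}(K)$ is the complex on $[m]\sqcup[m']$ with faces $I\sqcup J'$, $I\in K$, $J'\in K^\vee$, $I\cap J=\varnothing$. The chromatic number $\chi(L)$ is the least number of colors in a map $c\colon V(L)\to C$ with $c(u)\ne c(v)$ whenever $\{u,v\}\in L$. A complex $L$ is a weak suspension if there exist distinct $a,b\in V(L)$ with $\{a,b\}\notin L$ such that each of $a,b$ forms an edge of $L$ with every vertex of $V(L)\setminus\{a,b\}$. *)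

theory Defs
  imports Main
begin

definition simplicial_complex :: "nat \<Rightarrow> nat set set \<Rightarrow> bool" where
  "simplicial_complex m K \<longleftrightarrow> K \<noteq> {} \<and> (\<forall>F\<in>K. F \<subseteq> {1..m}) \<and>
     (\<forall>F\<in>K. \<forall>G. G \<subseteq> F \<longrightarrow> G \<in> K)"

definition vertices :: "'v set set \<Rightarrow> 'v set" where
  "vertices L = {v. {v} \<in> L}"

definition full_simplex :: "nat \<Rightarrow> nat set set" where
  "full_simplex m = Pow {1..m}"

text \<open>Alexander dual, as a complex on the primed copy [m'], encoded as Inr ` [m].
  J' is a face iff [m] - J is not a face of K.\<close>
definition alexander_dual :: "nat \<Rightarrow> nat set set \<Rightarrow> (nat + nat) set set" where
  "alexander_dual m K = {Inr ` J | J. J \<subseteq> {1..m} \<and> {1..m} - J \<notin> K}"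

text \<open>Bier sphere on [m] disjoint-union [m'] (Inl i = i, Inr i = i').\<close>
definition bier :: "nat \<Rightarrow> nat set set \<Rightarrow> (nat + nat) set set" where
  "bier m K = {Inl ` I \<union> Inr ` J | I J. I \<in> K \<and> Inr ` J \<in> alexander_dual m K \<and> I \<inter> J = {}}"

definition proper_coloring :: "'v set set \<Rightarrow> ('v \<Rightarrow> 'c) \<Rightarrow> bool" where
  "proper_coloring L c \<longleftrightarrow>
     (\<forall>u\<in>vertices L. \<forall>v\<in>vertices L. {u, v} \<in> L \<and> u \<noteq> v \<longrightarrow> c u \<noteq> c v)"

definition chromatic_number :: "'v set set \<Rightarrow> nat" where
  "chromatic_number L =
     (LEAST k. \<exists>c :: 'v \<Rightarrow> nat. c ` vertices L \<subseteq> {..<k} \<and> proper_coloring L c)"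

definition weak_suspension :: "'v set set \<Rightarrow> bool" where
  "weak_suspension L \<longleftrightarrow>
     (\<exists>a\<in>vertices L. \<exists>b\<in>vertices L. a \<noteq> b \<and> {a, b} \<notin> L \<and>
        (\<forall>v\<in>vertices L - {a, b}. {a, v} \<in> L \<and> {b, v} \<in> L))"

end

theory Submission
  imports Defs
begin

text \<open>Split a proper colouring \<open>c\<close> of \<open>Bier(K)\<close> into \<open>cu i = c i\<close> and \<open>cp i = c i'\<close>.
  Since \<open>i\<close> and \<open>k'\<close> are adjacent whenever \<open>i \<noteq> k\<close>, a colour used on both sides comes
  from a single index, so on the set \<open>W\<close> (\<open>bicoloured\<close> below) of indices with \<open>cu i \<noteq> cp i\<close> fewer than \<open>m\<close>
  colours force \<open>|cu W| + |cp W| < |W|\<close>. Hence some \<open>a \<noteq> b\<close> in \<open>W\<close> share a \<open>cu\<close>-colour,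
  so \<open>{a, b} \<notin> K\<close> and \<open>cp\<close> is injective off \<open>{a, b}\<close>; dually for \<open>cp\<close>. This pins down
  \<open>|W| = 3\<close> with \<open>cu\<close> and \<open>cp\<close> constant on \<open>W\<close>, and then any \<open>i \<notin> W\<close> (it exists as
  \<open>m \<ge> 4\<close>) satisfies \<open>{i, k} \<in> K\<close> and \<open>[m] - {i, k} \<notin> K\<close> for all \<open>k \<noteq> i\<close>: the vertices
  \<open>i\<close> and \<open>i'\<close> exhibit \<open>Bier(K)\<close> as a weak suspension.\<close>

section \<open>Faces and edges of the Bier sphere\<close>

lemma Inl_Un_Inr_eq_iff:
  "Inl ` I \<union> Inr ` J = Inl ` I' \<union> Inr ` J' \<longleftrightarrow> I = I' \<and> J = J'"
proof
  assume eq: "Inl ` I \<union> Inr ` J = Inl ` I' \<union> Inr ` J'"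
  have proj: "Inl -` (Inl ` A \<union> Inr ` B) = A" "Inr -` (Inl ` A \<union> Inr ` B) = B"
    for A B
    by auto
  show "I = I' \<and> J = J'"
    using proj eq by metis
qed auto

lemma Inr_image_mem_alexander_dual_iff:
  "Inr ` J \<in> alexander_dual m K \<longleftrightarrow> J \<subseteq> {1..m} \<and> {1..m} - J \<notin> K"
  unfolding alexander_dual_def by (auto simp: inj_image_eq_iff)

lemma Inl_Un_Inr_mem_bier_iff:
  "Inl ` I \<union> Inr ` J \<in> bier m K \<longleftrightarrow>
     I \<in> K \<and> J \<subseteq> {1..m} \<and> {1..m} - J \<notin> K \<and> I \<inter> J = {}"
  unfolding bier_def by (auto simp: Inl_Un_Inr_eq_iff Inr_image_mem_alexander_dual_iff)

lemma vertices_alexander_dual: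
  "vertices (alexander_dual m K) = Inr ` {j \<in> {1..m}. {1..m} - {j} \<notin> K}"
proof -
  have "{v} \<in> alexander_dual m K \<longleftrightarrow> v \<in> Inr ` {j \<in> {1..m}. {1..m} - {j} \<notin> K}" for v
  proof (cases v)
    case (Inr j)
    then show ?thesis
      using Inr_image_mem_alexander_dual_iff[of "{j}" m K] by auto
  qed (auto simp: alexander_dual_def)
  then show ?thesis
    unfolding vertices_def by blast
qed

lemma vertices_bier:
  assumes "{} \<in> K" "{1..m} \<notin> K"
  shows "vertices (bier m K) = Inl ` vertices K \<union> Inr ` {j \<in> {1..m}. {1..m} - {j} \<notin> K}"
proof -
  have "{v} \<in> bier m K \<longleftrightarrow> v \<in> Inl ` vertices K \<union> Inr ` {j \<in> {1..m}. {1..m} - {j} \<notin> K}"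
    for v
  proof (cases v)
    case (Inl i)
    then have "{v} = Inl ` {i} \<union> Inr ` {}"
      by simp
    then show ?thesis
      using Inl assms Inl_Un_Inr_mem_bier_iff[of "{i}" "{}" m K] by (auto simp: vertices_def)
  next
    case (Inr j)
    then have "{v} = Inl ` {} \<union> Inr ` {j}"
      by simp
    then show ?thesis
      using Inr assms Inl_Un_Inr_mem_bier_iff[of "{}" "{j}" m K] by auto
  qed
  then show ?thesis
    unfolding vertices_def by blast
qed

lemma bier_edge_Inl_Inl_iff:
  assumes "{1..m} \<notin> K"
  shows "{Inl i, Inl k} \<in> bier m K \<longleftrightarrow> {i, k} \<in> K"
proof -
  have "{Inl i, Inl k} = Inl ` {i, k} \<union> Inr ` {}"
    by simp
  then show ?thesis
    using assms Inl_Un_Inr_mem_bier_iff[of "{i, k}" "{}" m K] by simp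
qed

lemma bier_edge_Inr_Inr_iff:
  assumes "{} \<in> K" "i \<in> {1..m}" "k \<in> {1..m}"
  shows "{Inr i, Inr k} \<in> bier m K \<longleftrightarrow> {1..m} - {i, k} \<notin> K"
proof -
  have "{Inr i, Inr k} = Inl ` {} \<union> Inr ` {i, k}"
    by simp
  then show ?thesis
    using assms Inl_Un_Inr_mem_bier_iff[of "{}" "{i, k}" m K] by simp
qed

lemma bier_edge_Inl_Inr:
  assumes "{i} \<in> K" "k \<in> {1..m}" "{1..m} - {k} \<notin> K" "i \<noteq> k"
  shows "{Inl i, Inr k} \<in> bier m K"
proof -
  have "{Inl i, Inr k} = Inl ` {i} \<union> Inr ` {k}"
    by auto
  then show ?thesis
    using assms Inl_Un_Inr_mem_bier_iff[of "{i}" "{k}" m K] by simp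
qed

lemma bier_non_edge_Inl_Inr: "{Inl i, Inr i} \<notin> bier m K"
proof -
  have "{Inl i, Inr i} = Inl ` {i} \<union> Inr ` {i}"
    by auto
  then show ?thesis
    using Inl_Un_Inr_mem_bier_iff[of "{i}" "{i}" m K] by simp
qed

section \<open>Complexes whose vertex set and dual vertex set are full\<close>

lemma simplicial_complex_empty_mem: "simplicial_complex m K \<Longrightarrow> {} \<in> K"
  unfolding simplicial_complex_def by blast

lemma simplicial_complex_interval_notin:
  assumes "simplicial_complex m K" "K \<noteq> full_simplex m"
  shows "{1..m} \<notin> K"
proof
  assume "{1..m} \<in> K"
  with assms(1) have "K = Pow {1..m}"
    unfolding simplicial_complex_def by blast
  with assms(2) show False
    unfolding full_simplex_def by simp
qed

lemma vertices_eq_interval_if_card: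
  assumes "simplicial_complex m K" "card (vertices K) = m"
  shows "vertices K = {1..m}"
proof -
  have "vertices K \<subseteq> {1..m}"
    using assms(1) unfolding simplicial_complex_def vertices_def by blast
  then show ?thesis
    using assms(2) by (simp add: card_subset_eq)
qed

lemma co_vertex_notin_if_card_vertices_alexander_dual:
  assumes "card (vertices (alexander_dual m K)) = m" "j \<in> {1..m}"
  shows "{1..m} - {j} \<notin> K"
proof -
  have "card {j \<in> {1..m}. {1..m} - {j} \<notin> K} = m"
    using assms(1) by (simp add: vertices_alexander_dual card_image)
  then have "{j \<in> {1..m}. {1..m} - {j} \<notin> K} = {1..m}"
    by (intro card_subset_eq) auto
  with assms(2) show ?thesis
    by blast
qed

section \<open>Proper colourings of the Bier sphere with fewer than \<open>m\<close> colours\<close>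

lemma card_le_card_image_add_2:
  assumes "finite A" "inj_on f (A - {a, b})"
  shows "card A \<le> card (f ` A) + 2"
proof -
  have "card A \<le> card ((A - {a, b}) \<union> {a, b})"
    using assms(1) by (intro card_mono) auto
  also have "\<dots> \<le> card (A - {a, b}) + card {a, b}"
    by (rule card_Un_le)
  also have "card (A - {a, b}) = card (f ` (A - {a, b}))"
    using assms(2) by (simp add: card_image)
  also have "\<dots> \<le> card (f ` A)"
    using assms(1) by (intro card_mono) auto
  also have "card {a, b} \<le> 2"
    by (simp add: card_insert_le_m1)
  finally show ?thesis
    by simp
qed

text \<open>\<open>cu i\<close> and \<open>cp i\<close> are the colours of the vertices \<open>i\<close> and \<open>i'\<close>;
  the assumptions are properness on the edges \<open>{i, k}\<close>, \<open>{i', k'}\<close> and \<open>{i, k'}\<close>.\<close>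
locale bier_coloring =
  fixes X :: "'a set" and K :: "'a set set" and cu cp :: "'a \<Rightarrow> 'c"
  assumes finite_X: "finite X"
    and down_closed: "F \<in> K \<Longrightarrow> G \<subseteq> F \<Longrightarrow> G \<in> K"
    and cu_eq_non_edge: "i \<in> X \<Longrightarrow> k \<in> X \<Longrightarrow> i \<noteq> k \<Longrightarrow> cu i = cu k \<Longrightarrow> {i, k} \<notin> K"
    and cp_eq_co_edge: "i \<in> X \<Longrightarrow> k \<in> X \<Longrightarrow> i \<noteq> k \<Longrightarrow> cp i = cp k \<Longrightarrow> X - {i, k} \<in> K"
    and cu_neq_cp: "i \<in> X \<Longrightarrow> j \<in> X \<Longrightarrow> i \<noteq> j \<Longrightarrow> cu i \<noteq> cp j"
begin

definition bicoloured :: "'a set" where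
  "bicoloured = {i \<in> X. cu i \<noteq> cp i}"

lemma bicoloured_subset: "bicoloured \<subseteq> X"
  unfolding bicoloured_def by blast

lemma finite_bicoloured: "finite bicoloured"
  using finite_X bicoloured_subset by (rule finite_subset[rotated])

text \<open>A colour shared by \<open>cu i\<close> and \<open>cp j\<close> forces \<open>i = j\<close>, so \<open>cu ` bicoloured\<close>,
  \<open>cp ` bicoloured\<close> and \<open>cu ` (X - bicoloured)\<close> are disjoint, and \<open>cu\<close> is injective on the last.\<close>
lemma card_colours_ge:
  "card (cu ` bicoloured) + card (cp ` bicoloured) + card X
     \<le> card (cu ` X \<union> cp ` X) + card bicoloured"
proof -
  define D where "D = X - bicoloured"
  note WX = bicoloured_subset
  have DX: "D \<subseteq> X"
    unfolding D_def by blast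
  have fin: "finite bicoloured" "finite D"
    using finite_bicoloured finite_X DX finite_subset by auto
  have cu_cp_eq: "cu i = cp j \<Longrightarrow> i \<in> X \<Longrightarrow> j \<in> X \<Longrightarrow> i = j" for i j
    using cu_neq_cp by blast
  have D_eq: "i \<in> D \<Longrightarrow> cu i = cp i" for i
    unfolding D_def bicoloured_def by blast
  have disj1: "cu ` bicoloured \<inter> cp ` bicoloured = {}"
    using cu_cp_eq unfolding bicoloured_def by auto
  have "cu i \<noteq> cu j \<and> cp i \<noteq> cu j" if "i \<in> bicoloured" "j \<in> D" for i j
  proof -
    have "i \<noteq> j" "i \<in> X" "j \<in> X" "cu j = cp j"
      using that WX D_eq unfolding D_def by auto
    then show ?thesis
      using cu_neq_cp by metis
  qed
  then have disj2: "(cu ` bicoloured \<union> cp ` bicoloured) \<inter> cu ` D = {}"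
    by blast
  have "inj_on cu D"
    unfolding inj_on_def by (metis D_eq DX cu_cp_eq subsetD)
  then have "card (cu ` bicoloured) + card (cp ` bicoloured) + card D
      = card (cu ` bicoloured \<union> cp ` bicoloured \<union> cu ` D)"
    using disj1 disj2 fin by (simp add: card_Un_disjoint card_image)
  also have "\<dots> \<le> card (cu ` X \<union> cp ` X)"
    using finite_X WX DX by (intro card_mono) auto
  finally show ?thesis
    using card_Diff_subset[OF fin(1) WX] card_mono[OF finite_X WX] unfolding D_def by linarith
qed

lemma inj_on_cu_off_co_edge:
  assumes "X - {a, b} \<in> K"
  shows "inj_on cu (X - {a, b})"
proof (rule inj_onI, rule ccontr)
  fix u v
  assume uv: "u \<in> X - {a, b}" "v \<in> X - {a, b}" "cu u = cu v" "u \<noteq> v"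
  then have "{u, v} \<notin> K"
    using cu_eq_non_edge by blast
  moreover have "{u, v} \<subseteq> X - {a, b}"
    using uv by blast
  ultimately show False
    using assms down_closed by blast
qed

lemma inj_on_cp_off_non_edge:
  assumes "a \<in> X" "b \<in> X" "{a, b} \<notin> K"
  shows "inj_on cp (X - {a, b})"
proof (rule inj_onI, rule ccontr)
  fix u v
  assume uv: "u \<in> X - {a, b}" "v \<in> X - {a, b}" "cp u = cp v" "u \<noteq> v"
  then have "X - {u, v} \<in> K"
    using cp_eq_co_edge by blast
  moreover have "{a, b} \<subseteq> X - {u, v}"
    using assms uv by blast
  ultimately show False
    using assms(3) down_closed by blast
qed

lemma
  assumes "card (cu ` X \<union> cp ` X) < card X"
  shows card_bicoloured: "card bicoloured = 3"
    and card_cu_bicoloured: "card (cu ` bicoloured) = 1"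
    and card_cp_bicoloured: "card (cp ` bicoloured) = 1"
proof -
  note fin = finite_bicoloured and WX = bicoloured_subset
  have less: "card (cu ` bicoloured) + card (cp ` bicoloured) < card bicoloured"
    using card_colours_ge assms by linarith
  then have "bicoloured \<noteq> {}"
    by auto
  then have ge1: "card (cu ` bicoloured) \<ge> 1" "card (cp ` bicoloured) \<ge> 1"
    using fin by (auto simp: Suc_le_eq card_gt_0_iff)
  have "\<not> inj_on cu bicoloured"
    using less card_image by fastforce
  then obtain a b where "a \<in> bicoloured" "b \<in> bicoloured" "a \<noteq> b" "cu a = cu b"
    unfolding inj_on_def by blast
  then have "inj_on cp (X - {a, b})"
    using WX cu_eq_non_edge inj_on_cp_off_non_edge by blast
  then have cp_bound: "card bicoloured \<le> card (cp ` bicoloured) + 2"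
    using fin by (intro card_le_card_image_add_2[of _ _ a b]) (use WX in \<open>auto intro: inj_on_subset\<close>)
  have "\<not> inj_on cp bicoloured"
    using less card_image by fastforce
  then obtain c d where "c \<in> bicoloured" "d \<in> bicoloured" "c \<noteq> d" "cp c = cp d"
    unfolding inj_on_def by blast
  then have "inj_on cu (X - {c, d})"
    using WX cp_eq_co_edge inj_on_cu_off_co_edge by blast
  then have cu_bound: "card bicoloured \<le> card (cu ` bicoloured) + 2"
    using fin by (intro card_le_card_image_add_2[of _ _ c d]) (use WX in \<open>auto intro: inj_on_subset\<close>)
  show "card bicoloured = 3" "card (cu ` bicoloured) = 1" "card (cp ` bicoloured) = 1"
    using less ge1 cp_bound cu_bound by linarith+
qed

lemma exists_cone_vertex:
  assumes "4 \<le> card X" "card (cu ` X \<union> cp ` X) < card X"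
  shows "\<exists>i\<in>X. \<forall>k\<in>X - {i}. {i, k} \<in> K \<and> X - {i, k} \<notin> K"
proof -
  note fin = finite_bicoloured and WX = bicoloured_subset
  obtain \<gamma> where \<gamma>: "cu ` bicoloured = {\<gamma>}"
    using card_cu_bicoloured[OF assms(2)] card_1_singletonE by blast
  obtain \<delta> where \<delta>: "cp ` bicoloured = {\<delta>}"
    using card_cp_bicoloured[OF assms(2)] card_1_singletonE by blast
  have "\<not> X \<subseteq> bicoloured"
  proof
    assume "X \<subseteq> bicoloured"
    then have "card X \<le> 3"
      using card_mono[OF fin] card_bicoloured[OF assms(2)] by metis
    with assms(1) show False
      by simp
  qed
  then obtain i where i: "i \<in> X" "i \<notin> bicoloured"
    by blast
  have avoid: "\<exists>x\<in>bicoloured. \<exists>y\<in>bicoloured. x \<noteq> y \<and> x \<noteq> k \<and> y \<noteq> k" for k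
  proof -
    have "2 \<le> card (bicoloured - {k})"
      using card_bicoloured[OF assms(2)] card_Diff_singleton_if[of bicoloured k] by simp
    then obtain x y where "x \<in> bicoloured - {k}" "y \<in> bicoloured - {k}" "x \<noteq> y"
      using card_le_Suc0_iff_eq[of "bicoloured - {k}"] fin
      by (metis finite_Diff not_less_eq_eq numeral_2_eq_2)
    then show ?thesis
      by blast
  qed
  have "{i, k} \<in> K \<and> X - {i, k} \<notin> K" if k: "k \<in> X - {i}" for k
  proof
    obtain x y where xy: "x \<in> bicoloured" "y \<in> bicoloured" "x \<noteq> y" "x \<noteq> k" "y \<noteq> k"
      using avoid by blast
    have "cp x = cp y" "cu x = cu y"
      using xy \<gamma> \<delta> by (metis imageI singletonD)+
    have "X - {x, y} \<in> K"
      using cp_eq_co_edge xy \<open>cp x = cp y\<close> WX by blast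
    moreover have "{i, k} \<subseteq> X - {x, y}"
      using i k xy by blast
    ultimately show "{i, k} \<in> K"
      using down_closed by blast
    have "{x, y} \<notin> K"
      using cu_eq_non_edge xy \<open>cu x = cu y\<close> WX by blast
    moreover have "{x, y} \<subseteq> X - {i, k}"
      using i xy WX by blast
    ultimately show "X - {i, k} \<notin> K"
      using down_closed by blast
  qed
  with i show ?thesis
    by blast
qed

end

lemma chromatic_number_attained:
  assumes "finite (vertices L)"
  obtains c :: "'v \<Rightarrow> nat"
  where "c ` vertices L \<subseteq> {..<chromatic_number L}" "proper_coloring L c"
proof -
  obtain c :: "'v \<Rightarrow> nat" and n where "c ` vertices L = {..<n}" "inj_on c (vertices L)"
    using finite_imp_inj_to_nat_seg[OF assms] by (auto simp: lessThan_def)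
  then have "\<exists>k c. c ` vertices L \<subseteq> {..<k} \<and> proper_coloring L (c :: 'v \<Rightarrow> nat)"
    unfolding proper_coloring_def inj_on_def by blast
  from LeastI_ex[OF this] that show ?thesis
    unfolding chromatic_number_def by blast
qed

context
  fixes m :: nat and K :: "nat set set"
  assumes complex: "simplicial_complex m K"
    and proper: "K \<noteq> full_simplex m"
    and all_vertices: "vertices K = {1..m}"
    and all_co_vertices: "\<And>j. j \<in> {1..m} \<Longrightarrow> {1..m} - {j} \<notin> K"
begin

lemma singleton_face: "x \<in> {1..m} \<Longrightarrow> {x} \<in> K"
  using all_vertices unfolding vertices_def by blast

lemma vertices_bier_eq: "vertices (bier m K) = Inl ` {1..m} \<union> Inr ` {1..m}"
  using vertices_bier[OF simplicial_complex_empty_mem[OF complex]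
      simplicial_complex_interval_notin[OF complex proper]] all_vertices all_co_vertices
  by auto

lemma bier_coloring_of_proper_coloring:
  assumes "proper_coloring (bier m K) c"
  shows "bier_coloring {1..m} K (c \<circ> Inl) (c \<circ> Inr)"
proof
  have edge: "c u \<noteq> c v" if "{u, v} \<in> bier m K" "u \<noteq> v"
    "u \<in> vertices (bier m K)" "v \<in> vertices (bier m K)" for u v
    using assms that unfolding proper_coloring_def by blast
  show "finite {1..m}"
    by simp
  show "G \<in> K" if "F \<in> K" "G \<subseteq> F" for F G
    using complex that unfolding simplicial_complex_def by blast
  show "{i, k} \<notin> K" if "i \<in> {1..m}" "k \<in> {1..m}" "i \<noteq> k" "(c \<circ> Inl) i = (c \<circ> Inl) k" for i k
    using edge[of "Inl i" "Inl k"] that vertices_bier_eq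
      bier_edge_Inl_Inl_iff[OF simplicial_complex_interval_notin[OF complex proper]] by auto
  show "{1..m} - {i, k} \<in> K"
    if "i \<in> {1..m}" "k \<in> {1..m}" "i \<noteq> k" "(c \<circ> Inr) i = (c \<circ> Inr) k" for i k
    using edge[of "Inr i" "Inr k"] that vertices_bier_eq
      bier_edge_Inr_Inr_iff[OF simplicial_complex_empty_mem[OF complex]] by auto
  show "(c \<circ> Inl) i \<noteq> (c \<circ> Inr) j" if "i \<in> {1..m}" "j \<in> {1..m}" "i \<noteq> j" for i j
  proof -
    have "{i} \<in> K"
      using that singleton_face by blast
    then have "{Inl i, Inr j} \<in> bier m K"
      using bier_edge_Inl_Inr that all_co_vertices by blast
    then show ?thesis
      using edge[of "Inl i" "Inr j"] that vertices_bier_eq by auto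
  qed
qed

lemma weak_suspension_bier_if_cone_vertex:
  assumes "i \<in> {1..m}" "\<And>k. k \<in> {1..m} - {i} \<Longrightarrow> {i, k} \<in> K \<and> {1..m} - {i, k} \<notin> K"
  shows "weak_suspension (bier m K)"
proof -
  have cone: "{Inl i, v} \<in> bier m K \<and> {Inr i, v} \<in> bier m K"
    if v_vertex: "v \<in> vertices (bier m K) - {Inl i, Inr i}" for v
  proof -
    obtain k where k: "k \<in> {1..m} - {i}" and v: "v = Inl k \<or> v = Inr k"
      using v_vertex unfolding vertices_bier_eq by blast
    have "{k} \<in> K" "{i} \<in> K"
      using k assms(1) singleton_face by auto
    then have mixed: "{Inl k, Inr i} \<in> bier m K" "{Inl i, Inr k} \<in> bier m K"
      using k assms(1) by (auto intro!: bier_edge_Inl_Inr all_co_vertices)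
    have "{Inl i, Inl k} \<in> bier m K" "{Inr i, Inr k} \<in> bier m K"
      using assms(2)[OF k] k assms(1)
        bier_edge_Inl_Inl_iff[OF simplicial_complex_interval_notin[OF complex proper]]
        bier_edge_Inr_Inr_iff[OF simplicial_complex_empty_mem[OF complex]]
      by simp_all
    with v mixed show ?thesis
      by (auto simp: insert_commute)
  qed
  have "Inl i \<in> vertices (bier m K)" "Inr i \<in> vertices (bier m K)"
    using assms(1) vertices_bier_eq by auto
  with cone show ?thesis
    unfolding weak_suspension_def using bier_non_edge_Inl_Inr[of i m K]
    by (intro bexI[of _ "Inl i"] bexI[of _ "Inr i"] conjI) auto
qed

end

theorem mainTheorem8:
  fixes m :: nat and K :: "nat set set"
  assumes "m \<ge> 4"
    and "simplicial_complex m K"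
    and "K \<noteq> full_simplex m"
    and "card (vertices K) = m"
    and "card (vertices (alexander_dual m K)) = m"
    and "chromatic_number (bier m K) = m - 1"
  shows "weak_suspension (bier m K)"
proof -
  note vertices = vertices_eq_interval_if_card[OF assms(2,4)]
  note co_vertices = co_vertex_notin_if_card_vertices_alexander_dual[OF assms(5)]
  note vertices_bier = vertices_bier_eq[OF assms(2,3) vertices co_vertices]
  have "finite (vertices (bier m K))"
    using vertices_bier by simp
  then obtain c where c: "c ` vertices (bier m K) \<subseteq> {..<m - 1}" "proper_coloring (bier m K) c"
    using chromatic_number_attained assms(6) by metis
  interpret bier_coloring "{1..m}" K "c \<circ> Inl" "c \<circ> Inr"
    using bier_coloring_of_proper_coloring[OF assms(2,3) vertices co_vertices c(2)] .
  have "(c \<circ> Inl) ` {1..m} \<union> (c \<circ> Inr) ` {1..m} \<subseteq> {..<m - 1}"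
    using c(1) vertices_bier by auto
  then have "card ((c \<circ> Inl) ` {1..m} \<union> (c \<circ> Inr) ` {1..m}) \<le> m - 1"
    by (metis card_lessThan card_mono finite_lessThan)
  then have few_colours: "card ((c \<circ> Inl) ` {1..m} \<union> (c \<circ> Inr) ` {1..m}) < card {1..m}"
    using assms(1) by simp
  have "4 \<le> card {1..m}"
    using assms(1) by simp
  then obtain i where "i \<in> {1..m}" "\<forall>k\<in>{1..m} - {i}. {i, k} \<in> K \<and> {1..m} - {i, k} \<notin> K"
    using exists_cone_vertex few_colours by blast
  then show ?thesis
    using weak_suspension_bier_if_cone_vertex[OF assms(2,3) vertices co_vertices] by blast
qed

end
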